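(* Let $m\ge 4$, $t$, $g$ be positive integers with $t\ge g+1$, and put $\alpha=(t-1)-g$. Consider a bin configuration of the game $G(m,t,g)$ in which every current bin load is at most $t-1$. Let $A,B$ be two distinct bins, and define: - $s$ as the sum of the loads of all bins other than $A$ and $B$; - $r=(m-1)g-\alpha-s$; - $o=t-r$. Suppose that all of the following hold: - $r\le t-1$; - the load of $A$ is at most $\alpha$; - the load of $A$ is strictly greater than $(m-1)g-\alpha-o-s$. Then Algorithm wins from this configuration.
   Context: Bin stretching game $G(m,t,g)$: there are $m$ bins. In each round Adversary presents an item of positive integer size, and Algorithm then irrevocably places it into one of the $m$ bins. The load of a bin is the total size of the items in it. A bin configuration consists of: - the current loads $L_1,\dots,L_m$ of the bins, and - the multiset $\mathcal I$ of items presented so far, placed so that the bins have exactly these loads. "Algorithm wins from this configuration" means the following. There is an online rule which, given the configuration and the items presented so far, assigns each newly presented item to a bin. This rule must guarantee: for every finite sequence $e_1,\dots,e_j$ of further positive-integer items such that the multiset $\mathcal I\cup\{e_1,\dots,e_j\}$ can be partitioned into $m$ parts each of total size at most $g$, every bin load is at most $t-1$ after these items are placed. *)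

theory Defs
  imports Main "HOL-Library.Multiset"
begin

text \<open>Bins are indexed by 0..<m. A bin configuration is given by the multiset of items
  in each bin, Bins :: nat => nat multiset; the load of bin i is the sum of its items
  and the multiset of items presented so far is the sum of all bins.\<close>

definition cfg_load :: "(nat \<Rightarrow> nat multiset) \<Rightarrow> nat \<Rightarrow> nat" where
  "cfg_load Bins i = sum_mset (Bins i)"

definition cfg_items :: "nat \<Rightarrow> (nat \<Rightarrow> nat multiset) \<Rightarrow> nat multiset" where
  "cfg_items m Bins = (\<Sum>i<m. Bins i)"

definition packable :: "nat \<Rightarrow> nat \<Rightarrow> nat multiset \<Rightarrow> bool" where
  "packable m g M \<longleftrightarrow> (\<exists>P :: nat \<Rightarrow> nat multiset.
      (\<Sum>i<m. P i) = M \<and> (\<forall>i<m. sum_mset (P i) \<le> g))"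

text \<open>An online rule f maps the sequence e_1..e_k of newly presented items (the last one
  being the item to place) to the bin receiving e_k. Load of bin i after placing es.\<close>
definition load_after ::
  "(nat \<Rightarrow> nat multiset) \<Rightarrow> (nat list \<Rightarrow> nat) \<Rightarrow> nat list \<Rightarrow> nat \<Rightarrow> nat" where
  "load_after Bins f es i =
     cfg_load Bins i + (\<Sum>k<length es. if f (take (Suc k) es) = i then es ! k else 0)"

definition alg_wins :: "nat \<Rightarrow> nat \<Rightarrow> nat \<Rightarrow> (nat \<Rightarrow> nat multiset) \<Rightarrow> bool" where
  "alg_wins m t g Bins \<longleftrightarrow> (\<exists>f :: nat list \<Rightarrow> nat. (\<forall>xs. f xs < m) \<and>
      (\<forall>es. (\<forall>e\<in>set es. 0 < e) \<and> packable m g (cfg_items m Bins + mset es) \<longrightarrow>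
            (\<forall>i<m. load_after Bins f es i \<le> t - 1)))"

end

theory Submission
  imports Defs
begin

text \<open>The winning rule puts each item into bin B if it fits there below t, and into
  bin A otherwise.  While A has received nothing it still has room g, enough for any item.
  Once A has received an item, B had refused it, so the loads a, b of A and B satisfy
  a + b \<ge> L + t, where L is the original load of A.  An item x fitting neither bin would
  give a + x \<ge> t and b + x \<ge> t, hence 2(a + b + x) \<ge> L + 3t, and this is excluded by
  the volume bound m g on the packable item set together with the lower bound on L.\<close>

lemma sum_mset_sum: "finite I \<Longrightarrow> sum_mset (\<Sum>i\<in>I. M i) = (\<Sum>i\<in>I. sum_mset (M i))"
  by (induction I rule: finite_induct) auto

lemma packable_sum_mset_le: "packable m g M \<Longrightarrow> sum_mset M \<le> m * g"
proof -
  assume "packable m g M"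
  then obtain P where P: "(\<Sum>i<m. P i) = M" "\<forall>i<m. sum_mset (P i) \<le> g"
    unfolding packable_def by blast
  have "sum_mset M = (\<Sum>i<m. sum_mset (P i))"
    by (simp add: P(1) [symmetric] sum_mset_sum)
  also have "\<dots> \<le> (\<Sum>i<m. g)"
    using P(2) by (intro sum_mono) auto
  finally show ?thesis by simp
qed

lemma packable_item_le: "packable m g M \<Longrightarrow> x \<in># M \<Longrightarrow> x \<le> g"
proof -
  assume "packable m g M" "x \<in># M"
  then obtain P where P: "(\<Sum>i<m. P i) = M" "\<forall>i<m. sum_mset (P i) \<le> g"
    unfolding packable_def by blast
  then obtain i where "i < m" "x \<in># P i"
    using \<open>x \<in># M\<close> by (auto simp: set_mset_sum)
  then obtain Q where "P i = add_mset x Q"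
    by (blast dest: multi_member_split)
  then show "x \<le> g"
    using P(2) \<open>i < m\<close> by (metis le_add1 order.trans sum_mset.add_mset)
qed

lemma sum_remove_two:
  assumes "finite I" "a \<in> I" "b \<in> I" "a \<noteq> b"
  shows "sum f I = f a + f b + sum f (I - {a, b})"
proof -
  have "sum f I = f a + sum f (I - {a})"
    using assms by (intro sum.remove) auto
  also have "sum f (I - {a}) = f b + sum f (I - {a} - {b})"
    using assms by (intro sum.remove) auto
  finally show ?thesis
    by (simp add: Diff_insert2 [symmetric] add.assoc)
qed

lemma load_after_snoc:
  "load_after Bins f (es @ [x]) i = load_after Bins f es i + (if f (es @ [x]) = i then x else 0)"
proof -
  have "(\<Sum>k<length es. if f (take (Suc k) (es @ [x])) = i then (es @ [x]) ! k else 0)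
      = (\<Sum>k<length es. if f (take (Suc k) es) = i then es ! k else 0)"
    by (rule sum.cong) (auto simp: nth_append)
  then show ?thesis
    by (simp add: load_after_def)
qed

lemma load_after_Nil [simp]: "load_after Bins f [] i = cfg_load Bins i"
  by (simp add: load_after_def)

lemma load_after_unused:
  "(\<And>xs. f xs \<noteq> i) \<Longrightarrow> load_after Bins f es i = cfg_load Bins i"
  by (simp add: load_after_def)

lemma load_after_ge: "cfg_load Bins i \<le> load_after Bins f es i"
  by (simp add: load_after_def)

definition first_fit_load :: "nat \<Rightarrow> nat \<Rightarrow> nat list \<Rightarrow> nat" where
  "first_fit_load t b xs = foldl (\<lambda>b x. if b + x \<le> t - 1 then b + x else b) b xs"

lemma first_fit_load_Nil [simp]: "first_fit_load t b [] = b"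
  by (simp add: first_fit_load_def)

lemma first_fit_load_snoc:
  "first_fit_load t b (xs @ [x]) =
    (if first_fit_load t b xs + x \<le> t - 1 then first_fit_load t b xs + x else first_fit_load t b xs)"
  by (simp add: first_fit_load_def)

lemma first_fit_load_le: "b \<le> t - 1 \<Longrightarrow> first_fit_load t b xs \<le> t - 1"
  by (induction xs rule: rev_induct) (auto simp: first_fit_load_snoc)

definition first_fit_rule :: "nat \<Rightarrow> nat \<Rightarrow> nat \<Rightarrow> nat \<Rightarrow> nat list \<Rightarrow> nat" where
  "first_fit_rule t b A B es =
    (if first_fit_load t b (butlast es) + last es \<le> t - 1 then B else A)"

lemma first_fit_rule_snoc:
  "first_fit_rule t b A B (es @ [x]) = (if first_fit_load t b es + x \<le> t - 1 then B else A)"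
  by (simp add: first_fit_rule_def)

context
  fixes t A B :: nat and Bins :: "nat \<Rightarrow> nat multiset"
  assumes A_ne_B: "A \<noteq> B"
begin

abbreviation "first_fit \<equiv> first_fit_rule t (cfg_load Bins B) A B"

lemma load_after_first_fit_B:
  "load_after Bins first_fit es B = first_fit_load t (cfg_load Bins B) es"
  by (induction es rule: rev_induct)
    (simp_all add: load_after_snoc first_fit_rule_snoc first_fit_load_snoc A_ne_B)

lemma load_after_first_fit_total:
  "load_after Bins first_fit es A + load_after Bins first_fit es B =
    cfg_load Bins A + cfg_load Bins B + sum_list es"
  by (induction es rule: rev_induct)
    (simp_all add: load_after_snoc first_fit_rule_snoc A_ne_B A_ne_B [symmetric])

lemma load_after_first_fit_A:
  assumes A_room: "cfg_load Bins A + g \<le> t - 1"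
    and items: "\<forall>x\<in>set es. x \<le> g"
    and volume: "2 * (cfg_load Bins A + cfg_load Bins B + sum_list es) + 2 < cfg_load Bins A + 3 * t"
  shows "load_after Bins first_fit es A \<le> t - 1 \<and>
    (load_after Bins first_fit es A = cfg_load Bins A \<or>
     cfg_load Bins A + t \<le> load_after Bins first_fit es A + load_after Bins first_fit es B)"
  using items volume
proof (induction es rule: rev_induct)
  case Nil
  then show ?case
    using A_room by (simp add: load_after_def)
next
  case (snoc x es)
  define a where "a = load_after Bins first_fit es A"
  define b where "b = load_after Bins first_fit es B"
  have IH: "a \<le> t - 1" "a = cfg_load Bins A \<or> cfg_load Bins A + t \<le> a + b"
    using snoc by (auto simp: a_def b_def)
  have b_eq: "b = first_fit_load t (cfg_load Bins B) es"
    by (simp add: b_def load_after_first_fit_B)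
  have total: "a + b = cfg_load Bins A + cfg_load Bins B + sum_list es"
    by (simp add: a_def b_def load_after_first_fit_total)
  show ?case
  proof (cases "b + x \<le> t - 1")
    case True
    then show ?thesis
      using IH A_ne_B by (auto simp: load_after_snoc first_fit_rule_snoc b_eq [symmetric] a_def b_def)
  next
    case False
    have "a + x \<le> t - 1"
      using IH(2)
    proof
      assume "a = cfg_load Bins A"
      then show ?thesis
        using A_room snoc.prems(1) by simp
    next
      assume "cfg_load Bins A + t \<le> a + b"
      then show ?thesis
        using False total snoc.prems(2) by simp
    qed
    moreover have "cfg_load Bins A + t \<le> a + x + b"
      using False load_after_ge [of Bins A first_fit es] by (simp add: a_def)
    ultimately show ?thesis
      using False A_ne_B by (simp add: load_after_snoc first_fit_rule_snoc b_eq [symmetric] a_def b_def)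
  qed
qed

end

lemma alg_wins_first_fit:
  fixes m t g A B :: nat and Bins :: "nat \<Rightarrow> nat multiset"
  defines "S \<equiv> \<Sum>i\<in>{..<m} - {A, B}. cfg_load Bins i"
  assumes "A < m" "B < m" "A \<noteq> B"
    and loads: "\<forall>i<m. cfg_load Bins i \<le> t - 1"
    and A_room: "cfg_load Bins A + g \<le> t - 1"
    and volume: "2 * (m * g) + 2 < cfg_load Bins A + 3 * t + 2 * S"
  shows "alg_wins m t g Bins"
proof -
  let ?LA = "cfg_load Bins A" and ?LB = "cfg_load Bins B"
  let ?f = "first_fit_rule t (cfg_load Bins B) A B"
  show ?thesis
    unfolding alg_wins_def
  proof (intro exI [of _ ?f] conjI allI impI)
    fix xs
    show "?f xs < m"
      using \<open>A < m\<close> \<open>B < m\<close> by (simp add: first_fit_rule_def)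
  next
    fix es i
    assume "(\<forall>e\<in>set es. 0 < e) \<and> packable m g (cfg_items m Bins + mset es)" and "i < m"
    then have pack: "packable m g (cfg_items m Bins + mset es)"
      by blast
    have items: "\<forall>x\<in>set es. x \<le> g"
      using packable_item_le [OF pack] by simp
    have "sum_mset (cfg_items m Bins) + sum_list es \<le> m * g"
      using packable_sum_mset_le [OF pack] by (simp add: sum_mset_sum_list)
    then have "?LA + ?LB + S + sum_list es \<le> m * g"
      using sum_remove_two [of "{..<m}" A B "cfg_load Bins"] \<open>A < m\<close> \<open>B < m\<close> \<open>A \<noteq> B\<close>
      by (simp add: S_def cfg_items_def sum_mset_sum cfg_load_def)
    then have es_volume: "2 * (?LA + ?LB + sum_list es) + 2 < ?LA + 3 * t"
      using volume by simp
    show "load_after Bins ?f es i \<le> t - 1"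
    proof (cases "i = A \<or> i = B")
      case True
      then show ?thesis
        using load_after_first_fit_A [OF \<open>A \<noteq> B\<close> A_room items es_volume]
          load_after_first_fit_B [OF \<open>A \<noteq> B\<close>] first_fit_load_le loads \<open>B < m\<close>
        by auto
    next
      case False
      then have "load_after Bins ?f es i = cfg_load Bins i"
        by (intro load_after_unused) (auto simp: first_fit_rule_def)
      then show ?thesis
        using loads \<open>i < m\<close> by simp
    qed
  qed
qed

text \<open>Only the two bounds on the load of A enter the proof.\<close>

theorem mainTheorem3:
  fixes m t g A B :: nat and Bins :: "nat \<Rightarrow> nat multiset"
  defines "\<alpha> \<equiv> (int t - 1) - int g"
    and "s \<equiv> int (\<Sum>i\<in>{..<m} - {A, B}. cfg_load Bins i)"
  defines "r \<equiv> (int m - 1) * int g - \<alpha> - s"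
  defines "oo \<equiv> int t - r"
  assumes "m \<ge> 4" and "0 < t" and "0 < g" and "t \<ge> g + 1"
    and items_pos: "\<forall>i<m. \<forall>x\<in>#Bins i. 0 < x"
    and loads: "\<forall>i<m. cfg_load Bins i \<le> t - 1"
    and "A < m" and "B < m" and "A \<noteq> B"
    and "r \<le> int t - 1"
    and "int (cfg_load Bins A) \<le> \<alpha>"
    and "int (cfg_load Bins A) > (int m - 1) * int g - \<alpha> - oo - s"
  shows "alg_wins m t g Bins"
proof (rule alg_wins_first_fit)
  show "cfg_load Bins A + g \<le> t - 1"
    using \<open>int (cfg_load Bins A) \<le> \<alpha>\<close> unfolding \<alpha>_def by linarith
  have "int (2 * (m * g) + 2) <
    int (cfg_load Bins A + 3 * t + 2 * (\<Sum>i\<in>{..<m} - {A, B}. cfg_load Bins i))"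
    using \<open>int (cfg_load Bins A) > (int m - 1) * int g - \<alpha> - oo - s\<close>
    unfolding oo_def r_def \<alpha>_def s_def by (simp add: algebra_simps)
  then show "2 * (m * g) + 2 <
    cfg_load Bins A + 3 * t + 2 * (\<Sum>i\<in>{..<m} - {A, B}. cfg_load Bins i)"
    by (simp only: of_nat_less_iff)
qed (use assms in auto)

end
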